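(* Let $m\in\mathbb{N}$ and let $(Y^n_u)_{u\in\mathbb{R}^m_+}$, $n\in\mathbb{N}$, and $(Y_u)_{u\in\mathbb{R}^m_+}$ be real-valued random fields with continuous paths such that $Y^n\to Y$ in the sense of finite-dimensional distributions as $n\to\infty$. Assume $\int_{\mathbb{R}^m_+}\mathbb{E}|Y^n_u|\,\mathrm{d}u<\infty$ for all $n$ and $\int_{\mathbb{R}^m_+}\mathbb{E}|Y_u|\,\mathrm{d}u<\infty$. For $k,\ell,n\in\mathbb{N}$ set $$X_{n,k,\ell}=\int_{[0,\ell]^m}Y^n_{\lfloor uk\rfloor/k}\,\mathrm{d}u,\qquad X_{n,\ell}=\int_{[0,\ell]^m}Y^n_u\,\mathrm{d}u,$$ where $\lfloor u\rfloor=(\lfloor u_1\rfloor,\dots,\lfloor u_m\rfloor)$ componentwise. Suppose that for every $i\in\{0,\dots,m-1\}$ $$\lim_{\ell\to\infty}\limsup_{n\to\infty}\int_{\{u\in\mathbb{R}^m_+:\,u_{i+1}\ge\ell\}}\mathbb{E}|Y^n_u|\,\mathrm{d}u=0,$$ and that for all $\varepsilon>0$ and $\ell>0$ $$\lim_{k\to\infty}\limsup_{n\to\infty}\mathbb{P}\big(|X_{n,k,\ell}-X_{n,\ell}|>\varepsilon\big)=0.$$ Then $\int_{\mathbb{R}^m_+}Y^n_u\,\mathrm{d}u\xrightarrow{d}\int_{\mathbb{R}^m_+}Y_u\,\mathrm{d}u$ as $n\to\infty$.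
   Context: $\lfloor x\rfloor$ denotes the largest integer $l$ with $l\le x$. *)

theory Defs
  imports "HOL-Probability.Probability"
begin

definition conv_distr ::
  "(nat \<Rightarrow> 'a measure) \<Rightarrow> (nat \<Rightarrow> 'a \<Rightarrow> 'c::topological_space) \<Rightarrow> 'b measure \<Rightarrow> ('b \<Rightarrow> 'c) \<Rightarrow> bool"
where
  "conv_distr M X N Z \<longleftrightarrow>
     (\<forall>f :: 'c \<Rightarrow> real. continuous_on UNIV f \<longrightarrow> bounded (range f) \<longrightarrow>
        (\<lambda>n. \<integral>\<omega>. f (X n \<omega>) \<partial>M n) \<longlonglongrightarrow> (\<integral>\<omega>. f (Z \<omega>) \<partial>N))"

text \<open>Convergence of finite-dimensional distributions of random fields indexed by T:
  for every finite list of points t 0, ..., t (k-1) in T, the random vector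
  (Y n (t 0), ..., Y n (t (k-1))) converges in distribution (vectors are embedded in
  nat => real with the product topology, padded by zeros).\<close>
definition fdd_conv ::
  "(nat \<Rightarrow> 'a measure) \<Rightarrow> (nat \<Rightarrow> 'i \<Rightarrow> 'a \<Rightarrow> real) \<Rightarrow> 'b measure \<Rightarrow> ('i \<Rightarrow> 'b \<Rightarrow> real) \<Rightarrow> 'i set \<Rightarrow> bool"
where
  "fdd_conv M Y N Z T \<longleftrightarrow>
     (\<forall>(k::nat) (t::nat \<Rightarrow> 'i). (\<forall>i<k. t i \<in> T) \<longrightarrow>
        conv_distr M (\<lambda>n \<omega>. (\<lambda>i. if i < k then Y n (t i) \<omega> else 0))
                   N (\<lambda>\<omega>. (\<lambda>i. if i < k then Z (t i) \<omega> else 0)))"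

definition orthant :: "(real ^ 'm) set" where
  "orthant = {u. \<forall>j. 0 \<le> u $ j}"

end

theory Submission
  imports Defs
begin

(* Write S_n, S for the integrals of Y^n, Y over the orthant, X_{n,L} for the integral over the
   cube [0,L]^m and X_{n,k,L} for the integral over the cube of the grid discretisation
   u |-> Y^n(floor(u k) / k).  The discretised integrand is piecewise constant, so X_{n,k,L} is a
   finite linear combination of point values of Y^n and fdd convergence gives
   X_{n,k,L} -> X_{k,L} in distribution.  For the limit field, continuity of the paths gives
   X_{k,L} -> X_L as k -> oo and integrability gives X_L -> S as L -> oo, almost surely.  For the
   sequence, Markov's inequality and the tail hypothesis bound P(|S_n - X_{n,L}| > e), and the
   discretisation hypothesis bounds P(|X_{n,L} - X_{n,k,L}| > e), uniformly for large n.
   Billingsley's approximation theorem, tested against the bounded Lipschitz functions cts_step,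
   turns this into S_n -> S in distribution. *)

section \<open>Grid discretisation of the orthant\<close>

text \<open>For \<open>k = 0\<close> the division by zero gives \<open>grid_floor 0 u = 0\<close>.\<close>

definition grid_floor :: "nat \<Rightarrow> real ^ 'm \<Rightarrow> real ^ 'm" where
  "grid_floor k u = (\<chi> j. real_of_int \<lfloor>u $ j * real k\<rfloor> / real k)"

definition cube :: "nat \<Rightarrow> (real ^ 'm) set" where
  "cube L = {u. \<forall>j. 0 \<le> u $ j \<and> u $ j \<le> real L}"

lemma grid_floor_component_bounds:
  assumes "0 < k"
  shows "u $ j - 1 / real k < grid_floor k u $ j" "grid_floor k u $ j \<le> u $ j"
proof -
  have k: "0 < real k" using assms by simp
  have "(u $ j * real k - 1) / real k < real_of_int \<lfloor>u $ j * real k\<rfloor> / real k"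
    using k by (intro divide_strict_right_mono) linarith+
  then show "u $ j - 1 / real k < grid_floor k u $ j"
    using k by (simp add: grid_floor_def diff_divide_distrib)
  show "grid_floor k u $ j \<le> u $ j"
    using k by (simp add: grid_floor_def pos_divide_le_eq)
qed

lemma tendsto_grid_floor: "(\<lambda>k. grid_floor k u) \<longlonglongrightarrow> u"
proof (rule vec_tendstoI)
  fix j
  have lower: "(\<lambda>k. u $ j - 1 / real k) \<longlonglongrightarrow> u $ j"
    using tendsto_diff[OF tendsto_const lim_const_over_n[of 1]] by simp
  have "\<forall>\<^sub>F k in sequentially. u $ j - 1 / real k \<le> grid_floor k u $ j \<and> grid_floor k u $ j \<le> u $ j"
    using eventually_gt_at_top[of 0]
    by eventually_elim (simp add: less_imp_le grid_floor_component_bounds)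
  then show "(\<lambda>k. grid_floor k u $ j) \<longlonglongrightarrow> u $ j"
    by (intro tendsto_sandwich[OF _ _ lower tendsto_const]) (auto elim: eventually_mono)
qed

lemma grid_floor_nonneg: "0 \<le> u $ j \<Longrightarrow> 0 \<le> grid_floor k u $ j"
  by (simp add: grid_floor_def)

lemma grid_floor_le: "0 \<le> u $ j \<Longrightarrow> grid_floor k u $ j \<le> u $ j"
  using grid_floor_component_bounds(2)[of k u j] by (cases "k = 0") (auto simp: grid_floor_def)

lemma grid_floor_in_orthant: "u \<in> orthant \<Longrightarrow> grid_floor k u \<in> orthant"
  by (simp add: orthant_def grid_floor_nonneg)

lemma grid_floor_in_cube: "u \<in> cube L \<Longrightarrow> grid_floor k u \<in> cube L"
  unfolding cube_def using grid_floor_nonneg grid_floor_le order_trans by blast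

lemma countable_range_grid_floor: "countable (range (grid_floor k :: real ^ 'm::finite \<Rightarrow> _))"
proof -
  have "range (grid_floor k :: real ^ 'm \<Rightarrow> _)
      \<subseteq> (\<lambda>a. \<chi> j. real_of_int (a j) / real k) ` (UNIV :: ('m \<Rightarrow> int) set)"
    by (auto simp: grid_floor_def)
  then show ?thesis
    by (rule countable_subset) simp
qed

lemma finite_grid_floor_cube: "finite (grid_floor k ` cube L :: (real ^ 'm::finite) set)"
proof -
  have "grid_floor k ` cube L \<subseteq> (\<lambda>a. \<chi> j. real_of_int (a j) / real k) ` (UNIV \<rightarrow>\<^sub>E {0..int L * int k})"
  proof
    fix v assume "v \<in> grid_floor k ` cube L"
    then obtain u where u: "u \<in> cube L" and v: "v = grid_floor k u" by blast
    have "\<lfloor>u $ j * real k\<rfloor> \<le> int L * int k" for j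
    proof -
      have "u $ j * real k \<le> real (L * k)" using u by (auto simp: cube_def intro: mult_right_mono)
      then show ?thesis by (metis floor_mono floor_of_nat of_nat_mult)
    qed
    with u have "(\<lambda>j. \<lfloor>u $ j * real k\<rfloor>) \<in> UNIV \<rightarrow>\<^sub>E {0..int L * int k}"
      by (auto simp: cube_def)
    then show "v \<in> (\<lambda>a. \<chi> j. real_of_int (a j) / real k) ` (UNIV \<rightarrow>\<^sub>E {0..int L * int k})"
      unfolding v grid_floor_def by (rule rev_image_eqI) simp
  qed
  then show ?thesis
    by (rule finite_subset) (intro finite_imageI finite_PiE; simp)
qed

lemma sets_grid_floor_vimage: "grid_floor k -` {v} \<in> sets (borel :: (real ^ 'm::finite) measure)"
proof -
  have "grid_floor k -` {v} = (\<Inter>j. {u :: real ^ 'm. real_of_int \<lfloor>u $ j * real k\<rfloor> / real k = v $ j})"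
    by (auto simp: grid_floor_def vec_eq_iff)
  also have "\<dots> \<in> sets borel"
    by measurable
  finally show ?thesis .
qed

lemma cube_eq_cbox: "cube L = cbox 0 (\<chi> j. real L)"
  by (auto simp: cube_def mem_box_cart)

lemma compact_cube: "compact (cube L :: (real ^ 'm::finite) set)"
  unfolding cube_eq_cbox by (rule compact_cbox)

lemma sets_cube [measurable]: "cube L \<in> sets (borel :: (real ^ 'm::finite) measure)"
  unfolding cube_eq_cbox by simp

lemma cube_subset_orthant: "cube L \<subseteq> orthant"
  by (auto simp: cube_def orthant_def)

lemma sets_orthant [measurable]: "orthant \<in> sets (borel :: (real ^ 'm::finite) measure)"
  unfolding orthant_def by measurable

lemma incseq_cube: "incseq cube"
  by (auto simp: incseq_def cube_def intro: order_trans)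

lemma UN_cube: "(\<Union>L. cube L) = (orthant :: (real ^ 'm::finite) set)"
proof
  show "(\<Union>L. cube L) \<subseteq> (orthant :: (real ^ 'm) set)"
    using cube_subset_orthant by blast
  show "orthant \<subseteq> (\<Union>L. cube L :: (real ^ 'm) set)"
  proof
    fix u :: "real ^ 'm" assume "u \<in> orthant"
    moreover have "u $ j \<le> real (nat \<lceil>norm u\<rceil>)" for j
      using component_le_norm_cart[of u j] real_nat_ceiling_ge[of "norm u"] by linarith
    ultimately have "u \<in> cube (nat \<lceil>norm u\<rceil>)"
      by (simp add: cube_def orthant_def)
    then show "u \<in> (\<Union>L. cube L)" by blast
  qed
qed

section \<open>Integrals over cubes\<close>

lemma indicator_cube_grid_floor_eq_sum:
  fixes g :: "real ^ 'm::finite \<Rightarrow> real"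
  shows "indicator (cube L) u * g (grid_floor k u)
     = (\<Sum>v\<in>grid_floor k ` cube L. g v * indicator (cube L \<inter> grid_floor k -` {v}) u)"
proof (cases "u \<in> cube L")
  case True
  have "(\<Sum>v\<in>grid_floor k ` cube L. g v * indicator (cube L \<inter> grid_floor k -` {v}) u)
      = (\<Sum>v\<in>grid_floor k ` cube L. if v = grid_floor k u then g v else 0)"
    using True by (intro sum.cong) (auto simp: indicator_def)
  also have "\<dots> = g (grid_floor k u)"
    using True by (subst sum.delta) (auto simp: finite_grid_floor_cube)
  finally show ?thesis
    using True by simp
qed simp

lemma sets_cube_grid_floor_vimage [measurable]:
  "cube L \<inter> grid_floor k -` {v} \<in> sets (borel :: (real ^ 'm::finite) measure)"
  using sets_grid_floor_vimage[of k v] by simp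

lemma emeasure_cube_grid_floor_vimage_finite:
  "emeasure lborel (cube L \<inter> grid_floor k -` {v} :: (real ^ 'm::finite) set) < \<infinity>"
  by (rule emeasure_bounded_finite) (auto intro: bounded_subset compact_imp_bounded[OF compact_cube])

lemma borel_measurable_cube_grid_floor:
  fixes g :: "real ^ 'm::finite \<Rightarrow> real"
  shows "(\<lambda>u. indicator (cube L) u * g (grid_floor k u)) \<in> borel_measurable lborel"
  unfolding indicator_cube_grid_floor_eq_sum by measurable

lemma set_integral_cube_grid_floor_eq_sum:
  fixes g :: "real ^ 'm::finite \<Rightarrow> real"
  shows "(LINT u:cube L|lborel. g (grid_floor k u))
     = (\<Sum>v\<in>grid_floor k ` cube L. g v * measure lborel (cube L \<inter> grid_floor k -` {v}))"
proof -
  have "(LINT u:cube L|lborel. g (grid_floor k u))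
      = (\<integral>u. (\<Sum>v\<in>grid_floor k ` cube L. g v * indicator (cube L \<inter> grid_floor k -` {v}) u) \<partial>lborel)"
    by (simp add: set_lebesgue_integral_def indicator_cube_grid_floor_eq_sum)
  also have "\<dots> = (\<Sum>v\<in>grid_floor k ` cube L. g v * measure lborel (cube L \<inter> grid_floor k -` {v}))"
    by (subst Bochner_Integration.integral_sum)
       (auto intro!: integrable_real_indicator emeasure_cube_grid_floor_vimage_finite)
  finally show ?thesis .
qed

lemma tendsto_set_integral_cube_grid_floor:
  fixes g :: "real ^ 'm::finite \<Rightarrow> real"
  assumes g: "continuous_on (cube L) g"
  shows "(\<lambda>k. LINT u:cube L|lborel. g (grid_floor k u)) \<longlonglongrightarrow> (LINT u:cube L|lborel. g u)"
proof -
  obtain B where B: "\<And>u. u \<in> cube L \<Longrightarrow> \<bar>g u\<bar> \<le> B"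
    using compact_imp_bounded[OF compact_continuous_image[OF g compact_cube]]
    by (auto simp: bounded_real)
  have "(\<lambda>k. \<integral>u. indicator (cube L) u * g (grid_floor k u) \<partial>lborel)
      \<longlonglongrightarrow> (\<integral>u. indicator (cube L) u * g u \<partial>lborel)"
  proof (rule integral_dominated_convergence[where w="\<lambda>u. indicator (cube L) u * B"])
    show "integrable lborel (\<lambda>u. indicator (cube L) u * B)"
      using emeasure_bounded_finite[OF compact_imp_bounded[OF compact_cube]]
      by (intro integrable_mult_left integrable_real_indicator) auto
    show "AE u in lborel. norm (indicator (cube L) u * g (grid_floor k u)) \<le> indicator (cube L) u * B" for k
      by (auto simp: indicator_def intro: B grid_floor_in_cube)
    show "AE u in lborel. (\<lambda>k. indicator (cube L) u * g (grid_floor k u)) \<longlonglongrightarrow> indicator (cube L) u * g u"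
    proof (rule AE_I2)
      fix u :: "real ^ 'm"
      show "(\<lambda>k. indicator (cube L) u * g (grid_floor k u)) \<longlonglongrightarrow> indicator (cube L) u * g u"
      proof (cases "u \<in> cube L")
        case True
        have "(g \<circ> (\<lambda>k. grid_floor k u)) \<longlonglongrightarrow> g u"
          using True grid_floor_in_cube tendsto_grid_floor
          by (intro continuous_on_sequentially[THEN iffD1, rule_format, OF g]) auto
        then show ?thesis
          using True by (simp add: comp_def)
      qed simp
    qed
    show "(\<lambda>u. indicator (cube L) u * g u) \<in> borel_measurable lborel"
      using borel_measurable_continuous_on_indicator[OF _ g] by simp
    show "(\<lambda>u. indicator (cube L) u * g (grid_floor k u)) \<in> borel_measurable lborel" for k
      by (rule borel_measurable_cube_grid_floor)
  qed
  then show ?thesis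
    by (simp add: set_lebesgue_integral_def)
qed

lemma tendsto_set_integral_cube:
  fixes g :: "real ^ 'm::finite \<Rightarrow> real"
  assumes "set_integrable lborel orthant g"
  shows "(\<lambda>L. LINT u:cube L|lborel. g u) \<longlonglongrightarrow> (LINT u:orthant|lborel. g u)"
  using set_integral_cont_up[of cube lborel g] assms by (simp add: incseq_cube UN_cube)

lemma set_integral_diff_le_nn_integral:
  fixes f :: "'a \<Rightarrow> real"
  assumes f: "set_integrable M B f" and sets: "A \<in> sets M" "B \<in> sets M" and "A \<subseteq> B"
  shows "ennreal \<bar>(LINT x:B|M. f x) - (LINT x:A|M. f x)\<bar> \<le> (\<integral>\<^sup>+ x. indicator (B - A) x * ennreal \<bar>f x\<bar> \<partial>M)"
proof -
  have "(LINT x:B|M. f x) = (LINT x:A \<union> (B - A)|M. f x)"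
    using \<open>A \<subseteq> B\<close> by (simp add: Un_absorb1)
  also have "\<dots> = (LINT x:A|M. f x) + (LINT x:B - A|M. f x)"
    using sets \<open>A \<subseteq> B\<close> by (intro set_integral_Un set_integrable_subset[OF f]) auto
  finally have "ennreal \<bar>(LINT x:B|M. f x) - (LINT x:A|M. f x)\<bar>
      = ennreal (norm (\<integral>x. indicator (B - A) x * f x \<partial>M))"
    by (simp add: set_lebesgue_integral_def)
  also have "\<dots> \<le> (\<integral>\<^sup>+ x. norm (indicator (B - A) x * f x) \<partial>M)"
    using set_integrable_subset[OF f] sets
    by (intro integral_norm_bound_ennreal) (auto simp: set_integrable_def)
  also have "\<dots> = (\<integral>\<^sup>+ x. indicator (B - A) x * ennreal \<bar>f x\<bar> \<partial>M)"
    by (intro nn_integral_cong) (auto simp: indicator_def)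
  finally show ?thesis .
qed

lemma set_integral_orthant_diff_cube_le:
  fixes h :: "real ^ 'm::finite \<Rightarrow> real"
  assumes h: "set_integrable lborel orthant h" and nonneg: "\<And>u. 0 \<le> h u"
  shows "(LINT u:orthant - cube L|lborel. h u) \<le> (\<Sum>j\<in>UNIV. LINT u:{u \<in> orthant. real L \<le> u $ j}|lborel. h u)"
proof -
  define T where "T j = {u \<in> (orthant :: (real ^ 'm) set). real L \<le> u $ j}" for j
  have T: "T j \<in> sets lborel" "T j \<subseteq> orthant" for j
    unfolding T_def orthant_def by auto
  have "(LINT u:orthant - cube L|lborel. h u) \<le> (\<integral>u. (\<Sum>j\<in>UNIV. indicator (T j) u * h u) \<partial>lborel)"
    unfolding set_lebesgue_integral_def
  proof (rule integral_mono)
    show "integrable lborel (\<lambda>u. indicator (orthant - cube L) u *\<^sub>R h u)"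
      using set_integrable_subset[OF h] by (simp add: set_integrable_def)
    show "integrable lborel (\<lambda>u. \<Sum>j\<in>UNIV. indicator (T j) u * h u)"
      using set_integrable_subset[OF h T(1) T(2)]
      by (intro Bochner_Integration.integrable_sum) (simp add: set_integrable_def)
    fix u :: "real ^ 'm"
    show "indicator (orthant - cube L) u *\<^sub>R h u \<le> (\<Sum>j\<in>UNIV. indicator (T j) u * h u)"
    proof (cases "u \<in> orthant - cube L")
      case True
      then obtain j where "real L < u $ j"
        by (force simp: cube_def orthant_def not_le)
      with True have "u \<in> T j"
        by (simp add: T_def)
      then have "h u \<le> indicator (T j) u * h u" by simp
      also have "\<dots> \<le> (\<Sum>j\<in>UNIV. indicator (T j) u * h u)"
        using nonneg by (intro member_le_sum) auto
      finally show ?thesis using True by simp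
    qed (simp add: nonneg sum_nonneg)
  qed
  also have "\<dots> = (\<Sum>j\<in>UNIV. LINT u:T j|lborel. h u)"
    using set_integrable_subset[OF h T(1) T(2)]
    by (subst Bochner_Integration.integral_sum) (auto simp: set_integrable_def set_lebesgue_integral_def)
  finally show ?thesis
    by (simp add: T_def)
qed

section \<open>Approximation in distribution\<close>

lemma (in prob_space) tendsto_integral_continuous_bounded_AE:
  fixes f :: "real \<Rightarrow> real"
  assumes X: "\<And>k. X k \<in> borel_measurable M" and Y: "Y \<in> borel_measurable M"
    and lim: "AE \<omega> in M. (\<lambda>k. X k \<omega>) \<longlonglongrightarrow> Y \<omega>"
    and f: "continuous_on UNIV f" "\<And>x. \<bar>f x\<bar> \<le> B"
  shows "(\<lambda>k. \<integral>\<omega>. f (X k \<omega>) \<partial>M) \<longlonglongrightarrow> (\<integral>\<omega>. f (Y \<omega>) \<partial>M)"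
proof (rule integral_dominated_convergence[where w="\<lambda>_. B"])
  have [measurable]: "f \<in> borel_measurable borel"
    using f(1) by (rule borel_measurable_continuous_onI)
  show "(\<lambda>\<omega>. f (X k \<omega>)) \<in> borel_measurable M" for k
    using X by measurable
  show "(\<lambda>\<omega>. f (Y \<omega>)) \<in> borel_measurable M"
    using Y by measurable
  show "AE \<omega> in M. (\<lambda>k. f (X k \<omega>)) \<longlonglongrightarrow> f (Y \<omega>)"
    using lim by eventually_elim (rule continuous_on_tendsto_compose[OF f(1)], auto)
qed (use f(2) in auto)

lemma (in prob_space) integral_lipschitz_diff_le:
  fixes f :: "real \<Rightarrow> real"
  assumes X: "X \<in> borel_measurable M" and Y: "Y \<in> borel_measurable M"
    and f: "C-lipschitz_on UNIV f" "\<And>x. \<bar>f x\<bar> \<le> B" and e: "0 < e"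
  shows "\<bar>(\<integral>\<omega>. f (X \<omega>) \<partial>M) - (\<integral>\<omega>. f (Y \<omega>) \<partial>M)\<bar>
     \<le> C * e + 2 * B * prob {\<omega> \<in> space M. e < \<bar>X \<omega> - Y \<omega>\<bar>}"
proof -
  define A where "A = {\<omega> \<in> space M. e < \<bar>X \<omega> - Y \<omega>\<bar>}"
  have [measurable]: "f \<in> borel_measurable borel"
    using lipschitz_on_continuous_on[OF f(1)] by (rule borel_measurable_continuous_onI)
  note [measurable] = X Y
  have A [measurable]: "A \<in> events"
    unfolding A_def by measurable
  have int: "integrable M (\<lambda>\<omega>. f (X \<omega>))" "integrable M (\<lambda>\<omega>. f (Y \<omega>))"
    using f(2) by (auto intro!: integrable_const_bound[of _ B])
  have "\<bar>(\<integral>\<omega>. f (X \<omega>) \<partial>M) - (\<integral>\<omega>. f (Y \<omega>) \<partial>M)\<bar> \<le> (\<integral>\<omega>. \<bar>f (X \<omega>) - f (Y \<omega>)\<bar> \<partial>M)"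
    using int integral_abs_bound[of M "\<lambda>\<omega>. f (X \<omega>) - f (Y \<omega>)"] by simp
  also have "\<dots> \<le> (\<integral>\<omega>. C * e + 2 * B * indicator A \<omega> \<partial>M)"
  proof (rule integral_mono)
    show "integrable M (\<lambda>\<omega>. \<bar>f (X \<omega>) - f (Y \<omega>)\<bar>)" "integrable M (\<lambda>\<omega>. C * e + 2 * B * indicator A \<omega>)"
      using int by (auto simp: emeasure_eq_measure)
    fix \<omega> assume "\<omega> \<in> space M"
    show "\<bar>f (X \<omega>) - f (Y \<omega>)\<bar> \<le> C * e + 2 * B * indicator A \<omega>"
    proof (cases "\<omega> \<in> A")
      case True
      have "\<bar>f (X \<omega>) - f (Y \<omega>)\<bar> \<le> 2 * B"
        using f(2)[of "X \<omega>"] f(2)[of "Y \<omega>"] by linarith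
      moreover have "0 \<le> C * e"
        using lipschitz_on_nonneg[OF f(1)] e by simp
      ultimately show ?thesis
        using True by simp
    next
      case False
      have "\<bar>f (X \<omega>) - f (Y \<omega>)\<bar> \<le> C * \<bar>X \<omega> - Y \<omega>\<bar>"
        using lipschitz_onD[OF f(1)] by (simp add: dist_real_def)
      also have "\<dots> \<le> C * e"
        using False \<open>\<omega> \<in> space M\<close> lipschitz_on_nonneg[OF f(1)] by (auto simp: A_def intro: mult_left_mono)
      finally show ?thesis
        using False by simp
    qed
  qed
  also have "\<dots> = C * e + 2 * B * prob A"
    by (subst Bochner_Integration.integral_add) (auto simp: prob_space emeasure_eq_measure)
  finally show ?thesis
    unfolding A_def .
qed

lemma (in prob_space) prob_abs_diff_gt_le:
  fixes X Y Z :: "'a \<Rightarrow> real"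
  assumes [measurable]: "X \<in> borel_measurable M" "Y \<in> borel_measurable M" "Z \<in> borel_measurable M"
  shows "prob {\<omega> \<in> space M. d + e < \<bar>X \<omega> - Z \<omega>\<bar>}
     \<le> prob {\<omega> \<in> space M. d < \<bar>X \<omega> - Y \<omega>\<bar>} + prob {\<omega> \<in> space M. e < \<bar>Y \<omega> - Z \<omega>\<bar>}"
proof -
  have "{\<omega> \<in> space M. d + e < \<bar>X \<omega> - Z \<omega>\<bar>}
      \<subseteq> {\<omega> \<in> space M. d < \<bar>X \<omega> - Y \<omega>\<bar>} \<union> {\<omega> \<in> space M. e < \<bar>Y \<omega> - Z \<omega>\<bar>}"
  proof (intro subsetI)
    fix \<omega> assume "\<omega> \<in> {\<omega> \<in> space M. d + e < \<bar>X \<omega> - Z \<omega>\<bar>}"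
    then show "\<omega> \<in> {\<omega> \<in> space M. d < \<bar>X \<omega> - Y \<omega>\<bar>} \<union> {\<omega> \<in> space M. e < \<bar>Y \<omega> - Z \<omega>\<bar>}"
      using abs_triangle_ineq[of "X \<omega> - Y \<omega>" "Y \<omega> - Z \<omega>"] by auto
  qed
  then have "prob {\<omega> \<in> space M. d + e < \<bar>X \<omega> - Z \<omega>\<bar>}
      \<le> prob ({\<omega> \<in> space M. d < \<bar>X \<omega> - Y \<omega>\<bar>} \<union> {\<omega> \<in> space M. e < \<bar>Y \<omega> - Z \<omega>\<bar>})"
    by (rule finite_measure_mono) measurable
  also have "\<dots> \<le> prob {\<omega> \<in> space M. d < \<bar>X \<omega> - Y \<omega>\<bar>} + prob {\<omega> \<in> space M. e < \<bar>Y \<omega> - Z \<omega>\<bar>}"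
    by (rule measure_subadditive) measurable
  finally show ?thesis .
qed

lemma tendsto_of_approximations:
  fixes x :: "nat \<Rightarrow> real"
  assumes approx: "\<And>r. 0 < r \<Longrightarrow> \<exists>a b. a \<longlonglongrightarrow> b \<and> \<bar>b - y\<bar> < r \<and> (\<forall>\<^sub>F n in sequentially. \<bar>x n - a n\<bar> < r)"
  shows "x \<longlonglongrightarrow> y"
  unfolding tendsto_iff dist_real_def
proof (intro allI impI)
  fix r :: real assume "0 < r"
  then obtain a b where a: "a \<longlonglongrightarrow> b" and b: "\<bar>b - y\<bar> < r / 3"
    and x: "\<forall>\<^sub>F n in sequentially. \<bar>x n - a n\<bar> < r / 3"
    using approx[of "r / 3"] by auto
  have "\<forall>\<^sub>F n in sequentially. \<bar>a n - b\<bar> < r / 3"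
    using tendstoD[OF a, of "r / 3"] \<open>0 < r\<close> by (simp add: dist_real_def)
  with x show "\<forall>\<^sub>F n in sequentially. \<bar>x n - y\<bar> < r"
    by eventually_elim (use b in linarith)
qed

text \<open>Billingsley's approximation theorem (Convergence of Probability Measures, Thm. 3.2),
  for a single bounded Lipschitz test function.\<close>

lemma tendsto_integral_lipschitz_of_approximations:
  fixes S :: "nat \<Rightarrow> 'a \<Rightarrow> real" and T :: "'b \<Rightarrow> real" and f :: "real \<Rightarrow> real"
  assumes M: "\<And>n. prob_space (M n)" and S: "\<And>n. S n \<in> borel_measurable (M n)"
    and f: "C-lipschitz_on UNIV f" "\<And>x. \<bar>f x\<bar> \<le> B"
    and approx: "\<And>e r. 0 < e \<Longrightarrow> 0 < r \<Longrightarrow> \<exists>A U. (\<forall>n. A n \<in> borel_measurable (M n))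
      \<and> (\<lambda>n. \<integral>\<omega>. f (A n \<omega>) \<partial>M n) \<longlonglongrightarrow> (\<integral>\<omega>. f (U \<omega>) \<partial>N)
      \<and> \<bar>(\<integral>\<omega>. f (U \<omega>) \<partial>N) - (\<integral>\<omega>. f (T \<omega>) \<partial>N)\<bar> < r
      \<and> (\<forall>\<^sub>F n in sequentially. measure (M n) {\<omega> \<in> space (M n). e < \<bar>S n \<omega> - A n \<omega>\<bar>} < r)"
  shows "(\<lambda>n. \<integral>\<omega>. f (S n \<omega>) \<partial>M n) \<longlonglongrightarrow> (\<integral>\<omega>. f (T \<omega>) \<partial>N)"
proof (rule tendsto_of_approximations)
  fix r :: real assume r: "0 < r"
  have C: "0 \<le> C" and B: "0 \<le> B"
    using lipschitz_on_nonneg[OF f(1)] f(2)[of 0] by auto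
  define e where "e = r / (2 * (C + 1))"
  define r' where "r' = r / (2 * (2 * B + 1))"
  have "0 < e" "0 < r'"
    using r C B by (simp_all add: e_def r'_def)
  then obtain A U where A: "\<And>n. A n \<in> borel_measurable (M n)"
    and lim: "(\<lambda>n. \<integral>\<omega>. f (A n \<omega>) \<partial>M n) \<longlonglongrightarrow> (\<integral>\<omega>. f (U \<omega>) \<partial>N)"
    and U: "\<bar>(\<integral>\<omega>. f (U \<omega>) \<partial>N) - (\<integral>\<omega>. f (T \<omega>) \<partial>N)\<bar> < r'"
    and close: "\<forall>\<^sub>F n in sequentially. measure (M n) {\<omega> \<in> space (M n). e < \<bar>S n \<omega> - A n \<omega>\<bar>} < r'"
    using approx by blast
  have "C * e < r / 2" "2 * B * r' \<le> r / 2" "r' \<le> r"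
    using r C B by (simp_all add: e_def r'_def field_simps)
  moreover have "\<forall>\<^sub>F n in sequentially. \<bar>(\<integral>\<omega>. f (S n \<omega>) \<partial>M n) - (\<integral>\<omega>. f (A n \<omega>) \<partial>M n)\<bar> < r"
    using close
  proof eventually_elim
    case (elim n)
    have "\<bar>(\<integral>\<omega>. f (S n \<omega>) \<partial>M n) - (\<integral>\<omega>. f (A n \<omega>) \<partial>M n)\<bar>
        \<le> C * e + 2 * B * measure (M n) {\<omega> \<in> space (M n). e < \<bar>S n \<omega> - A n \<omega>\<bar>}"
      using prob_space.integral_lipschitz_diff_le[OF M S A f \<open>0 < e\<close>] .
    also have "\<dots> \<le> C * e + 2 * B * r'"
      using elim B by (simp add: mult_left_mono)
    finally show ?case
      using \<open>C * e < r / 2\<close> \<open>2 * B * r' \<le> r / 2\<close> by linarith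
  qed
  ultimately show "\<exists>a b. a \<longlonglongrightarrow> b \<and> \<bar>b - (\<integral>\<omega>. f (T \<omega>) \<partial>N)\<bar> < r
      \<and> (\<forall>\<^sub>F n in sequentially. \<bar>(\<integral>\<omega>. f (S n \<omega>) \<partial>M n) - a n\<bar> < r)"
    using lim U by (intro exI conjI) auto
qed

lemma fdd_conv_tendsto_integral_linear_combination:
  fixes Y :: "nat \<Rightarrow> 'i \<Rightarrow> 'a \<Rightarrow> real" and Z :: "'i \<Rightarrow> 'b \<Rightarrow> real" and f :: "real \<Rightarrow> real"
  assumes fdd: "fdd_conv M Y N Z T" and G: "finite G" "G \<subseteq> T"
    and f: "continuous_on UNIV f" "bounded (range f)"
  shows "(\<lambda>n. \<integral>\<omega>. f (\<Sum>v\<in>G. Y n v \<omega> * w v) \<partial>M n) \<longlonglongrightarrow> (\<integral>\<omega>. f (\<Sum>v\<in>G. Z v \<omega> * w v) \<partial>N)"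
proof -
  obtain t where t: "bij_betw t {..<card G} G"
    using ex_bij_betw_nat_finite[OF G(1)] by (auto simp: lessThan_atLeast0)
  define K where "K = card G"
  define f' where "f' x = f (\<Sum>i<K. x i * w (t i))" for x :: "nat \<Rightarrow> real"
  have "continuous_on UNIV (\<lambda>x::nat \<Rightarrow> real. \<Sum>i<K. x i * w (t i))"
    by (intro continuous_on_sum continuous_on_mult_right continuous_on_product_coordinates)
  then have "continuous_on UNIV f'"
    unfolding f'_def by (rule continuous_on_compose2[OF f(1)]) auto
  moreover have "bounded (range f')"
    using f(2) by (rule bounded_subset) (auto simp: f'_def)
  moreover have "\<forall>i<K. t i \<in> T"
    using t G(2) by (auto simp: K_def bij_betw_def)
  ultimately have "(\<lambda>n. \<integral>\<omega>. f' (\<lambda>i. if i < K then Y n (t i) \<omega> else 0) \<partial>M n)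
      \<longlonglongrightarrow> (\<integral>\<omega>. f' (\<lambda>i. if i < K then Z (t i) \<omega> else 0) \<partial>N)"
    using fdd unfolding fdd_conv_def conv_distr_def by blast
  moreover have reindex: "f' (\<lambda>i. if i < K then X (t i) else 0) = f (\<Sum>v\<in>G. X v * w v)" for X
    unfolding f'_def K_def sum.reindex_bij_betw[OF t, symmetric] by simp
  ultimately show ?thesis
    using reindex[of "\<lambda>v. Y _ v _"] reindex[of "\<lambda>v. Z v _"] by simp
qed

lemma abs_cts_step_le: "\<bar>cts_step a b x\<bar> \<le> 1"
  by (simp add: cts_step_def)

lemma lipschitz_cts_step:
  assumes "a < b"
  shows "(1 / (b - a))-lipschitz_on UNIV (cts_step a b)"
proof (rule lipschitz_onI)
  have clamp: "cts_step a b x = max 0 (min 1 ((b - x) / (b - a)))" for x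
    using assms by (auto simp: cts_step_def field_simps)
  fix x y :: real
  have "\<bar>max 0 (min 1 s) - max 0 (min 1 s')\<bar> \<le> \<bar>s - s'\<bar>" for s s' :: real
    by (simp add: max_def min_def abs_le_iff) arith
  then have "\<bar>cts_step a b x - cts_step a b y\<bar> \<le> \<bar>(b - x) / (b - a) - (b - y) / (b - a)\<bar>"
    unfolding clamp .
  also have "\<dots> = 1 / (b - a) * \<bar>x - y\<bar>"
    using assms by (simp add: diff_divide_distrib[symmetric] abs_div abs_minus_commute)
  finally show "dist (cts_step a b x) (cts_step a b y) \<le> 1 / (b - a) * dist x y"
    by (simp add: dist_real_def)
qed (use assms in simp)

section \<open>Random fields with continuous paths on the orthant\<close>

text \<open>A Caratheodory argument: the field is the pointwise limit of its grid discretisations,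
  each of which depends on \<open>u\<close> only through the countably many values of \<open>grid_floor k u\<close>.\<close>

lemma borel_measurable_orthant_field:
  fixes F :: "real ^ 'm::finite \<Rightarrow> 'a \<Rightarrow> real"
  assumes meas: "\<And>u. u \<in> orthant \<Longrightarrow> F u \<in> borel_measurable M"
    and cont: "\<And>\<omega>. \<omega> \<in> space M \<Longrightarrow> continuous_on orthant (\<lambda>u. F u \<omega>)"
  shows "(\<lambda>(\<omega>, u). indicator orthant u * F u \<omega>) \<in> borel_measurable (M \<Otimes>\<^sub>M lborel)"
proof (rule borel_measurable_LIMSEQ_real)
  define F' where "F' v \<omega> = (if v \<in> orthant then F v \<omega> else 0)" for v \<omega>
  show "(\<lambda>x. indicator orthant (snd x) * F' (grid_floor k (snd x)) (fst x)) \<in> borel_measurable (M \<Otimes>\<^sub>M lborel)"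
    for k
  proof (rule measurable_compose_countable'[where f="\<lambda>v x. indicator orthant (snd x) * F' v (fst x)"
        and g="grid_floor k \<circ> snd" and I="range (grid_floor k)", unfolded comp_def])
    show "(\<lambda>x. indicator orthant (snd x) * F' v (fst x)) \<in> borel_measurable (M \<Otimes>\<^sub>M lborel)" for v
      using meas[of v] by (cases "v \<in> orthant") (simp_all add: F'_def)
    show "(\<lambda>x. grid_floor k (snd x)) \<in> M \<Otimes>\<^sub>M lborel \<rightarrow>\<^sub>M count_space (range (grid_floor k))"
      unfolding measurable_count_space_eq_countable[OF countable_range_grid_floor]
      using measurable_sets[OF measurable_snd sets_grid_floor_vimage[unfolded sets_lborel[symmetric]]]
      by (auto simp: vimage_def space_pair_measure Int_def)
  qed (rule countable_range_grid_floor)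
  show "(\<lambda>k. indicator orthant (snd x) * F' (grid_floor k (snd x)) (fst x))
      \<longlonglongrightarrow> (case x of (\<omega>, u) \<Rightarrow> indicator orthant u * F u \<omega>)"
    if x: "x \<in> space (M \<Otimes>\<^sub>M lborel)" for x
  proof (cases x)
    case (Pair \<omega> u)
    show ?thesis
    proof (cases "u \<in> orthant")
      case True
      have "\<omega> \<in> space M"
        using x Pair by (simp add: space_pair_measure)
      have "((\<lambda>u. F u \<omega>) \<circ> (\<lambda>k. grid_floor k u)) \<longlonglongrightarrow> F u \<omega>"
        using True grid_floor_in_orthant tendsto_grid_floor
        by (intro continuous_on_sequentially[THEN iffD1, rule_format, OF cont[OF \<open>\<omega> \<in> space M\<close>]]) auto
      then show ?thesis
        using True Pair grid_floor_in_orthant[OF True] by (simp add: F'_def comp_def)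
    qed (simp add: Pair)
  qed
qed

locale orthant_field = prob_space P
  for P :: "'a measure" +
  fixes F :: "real ^ 'm::finite \<Rightarrow> 'a \<Rightarrow> real"
  assumes measurable_field: "\<And>u. u \<in> orthant \<Longrightarrow> F u \<in> borel_measurable P"
    and continuous_paths: "\<And>\<omega>. \<omega> \<in> space P \<Longrightarrow> continuous_on orthant (\<lambda>u. F u \<omega>)"
begin

lemma borel_measurable_joint_indicator:
  assumes "A \<in> sets borel" "A \<subseteq> orthant"
  shows "(\<lambda>(\<omega>, u). indicator A u * F u \<omega>) \<in> borel_measurable (P \<Otimes>\<^sub>M lborel)"
proof -
  have "(\<lambda>(\<omega>, u). indicator A u * (indicator orthant u * F u \<omega>)) \<in> borel_measurable (P \<Otimes>\<^sub>M lborel)"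
    using borel_measurable_orthant_field[OF measurable_field continuous_paths] assms(1)
    by measurable
  moreover have "indicator A u * (indicator orthant u * F u \<omega>) = indicator A u * F u \<omega>" for u \<omega>
    using assms(2) by (auto simp: indicator_def)
  ultimately show ?thesis
    by simp
qed

lemma borel_measurable_set_integral:
  assumes "A \<in> sets borel" "A \<subseteq> orthant"
  shows "(\<lambda>\<omega>. LINT u:A|lborel. F u \<omega>) \<in> borel_measurable P"
  unfolding set_lebesgue_integral_def
  using lborel.borel_measurable_lebesgue_integral[OF borel_measurable_joint_indicator[OF assms]] by simp

lemma borel_measurable_cube_grid_integral:
  "(\<lambda>\<omega>. LINT u:cube L|lborel. F (grid_floor k u) \<omega>) \<in> borel_measurable P"
proof -
  have "grid_floor k ` cube L \<subseteq> orthant"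
    using grid_floor_in_cube cube_subset_orthant by blast
  then have "(\<lambda>\<omega>. \<Sum>v\<in>grid_floor k ` cube L. F v \<omega> * measure lborel (cube L \<inter> grid_floor k -` {v}))
      \<in> borel_measurable P"
    by (intro borel_measurable_sum borel_measurable_times borel_measurable_const measurable_field) auto
  moreover have "(LINT u:cube L|lborel. F (grid_floor k u) \<omega>)
      = (\<Sum>v\<in>grid_floor k ` cube L. F v \<omega> * measure lborel (cube L \<inter> grid_floor k -` {v}))" for \<omega>
    by (rule set_integral_cube_grid_floor_eq_sum)
  ultimately show ?thesis
    by simp
qed

lemma tendsto_integral_cube_grid_integral:
  fixes f :: "real \<Rightarrow> real"
  assumes "continuous_on UNIV f" "\<And>x. \<bar>f x\<bar> \<le> B"
  shows "(\<lambda>k. \<integral>\<omega>. f (LINT u:cube L|lborel. F (grid_floor k u) \<omega>) \<partial>P)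
     \<longlonglongrightarrow> (\<integral>\<omega>. f (LINT u:cube L|lborel. F u \<omega>) \<partial>P)"
proof (rule tendsto_integral_continuous_bounded_AE[OF borel_measurable_cube_grid_integral
      borel_measurable_set_integral[OF sets_cube cube_subset_orthant] _ assms])
  show "AE \<omega> in P. (\<lambda>k. LINT u:cube L|lborel. F (grid_floor k u) \<omega>) \<longlonglongrightarrow> (LINT u:cube L|lborel. F u \<omega>)"
    using continuous_on_subset[OF continuous_paths cube_subset_orthant]
    by (intro AE_I2 tendsto_set_integral_cube_grid_floor)
qed

end

locale integrable_orthant_field = orthant_field +
  assumes mean_abs_finite:
    "(\<integral>\<^sup>+ u. indicator orthant u * (\<integral>\<^sup>+ \<omega>. ennreal \<bar>F u \<omega>\<bar> \<partial>P) \<partial>lborel) < \<infinity>"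
begin

interpretation pair_sigma_finite P lborel ..

lemma integrable_joint: "integrable (P \<Otimes>\<^sub>M lborel) (\<lambda>(\<omega>, u). indicator orthant u * F u \<omega>)"
  unfolding integrable_iff_bounded
proof
  show "(\<lambda>(\<omega>, u). indicator orthant u * F u \<omega>) \<in> borel_measurable (P \<Otimes>\<^sub>M lborel)"
    by (rule borel_measurable_joint_indicator[OF sets_orthant order_refl])
  then have "(\<integral>\<^sup>+ x. ennreal (norm (case x of (\<omega>, u) \<Rightarrow> indicator orthant u * F u \<omega>)) \<partial>(P \<Otimes>\<^sub>M lborel))
      = (\<integral>\<^sup>+ u. \<integral>\<^sup>+ \<omega>. ennreal \<bar>indicator orthant u * F u \<omega>\<bar> \<partial>P \<partial>lborel)"
    by (subst nn_integral_snd[symmetric]) auto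
  also have "\<dots> = (\<integral>\<^sup>+ u. indicator orthant u * (\<integral>\<^sup>+ \<omega>. ennreal \<bar>F u \<omega>\<bar> \<partial>P) \<partial>lborel)"
    by (intro nn_integral_cong) (simp split: split_indicator)
  finally show "(\<integral>\<^sup>+ x. ennreal (norm (case x of (\<omega>, u) \<Rightarrow> indicator orthant u * F u \<omega>)) \<partial>(P \<Otimes>\<^sub>M lborel)) < \<infinity>"
    using mean_abs_finite by simp
qed

lemma AE_set_integrable_paths: "AE \<omega> in P. set_integrable lborel orthant (\<lambda>u. F u \<omega>)"
  using AE_integrable_fst[OF integrable_joint] by (simp add: set_integrable_def)

lemma set_integrable_mean_abs: "set_integrable lborel orthant (\<lambda>u. \<integral>\<omega>. \<bar>F u \<omega>\<bar> \<partial>P)"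
proof -
  have "integrable (P \<Otimes>\<^sub>M lborel) (\<lambda>(\<omega>, u). \<bar>indicator orthant u * F u \<omega>\<bar>)"
    using integrable_abs[OF integrable_joint] by (simp add: case_prod_beta')
  from integrable_snd[OF this] show ?thesis
    by (simp add: set_integrable_def abs_mult)
qed

lemma tendsto_integral_cube_integral:
  fixes f :: "real \<Rightarrow> real"
  assumes "continuous_on UNIV f" "\<And>x. \<bar>f x\<bar> \<le> B"
  shows "(\<lambda>L. \<integral>\<omega>. f (LINT u:cube L|lborel. F u \<omega>) \<partial>P) \<longlonglongrightarrow> (\<integral>\<omega>. f (LINT u:orthant|lborel. F u \<omega>) \<partial>P)"
  using AE_set_integrable_paths
  by (intro tendsto_integral_continuous_bounded_AE[OF
        borel_measurable_set_integral[OF sets_cube cube_subset_orthant]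
        borel_measurable_set_integral[OF sets_orthant order_refl] _ assms])
     (auto intro: tendsto_set_integral_cube elim: eventually_mono)

lemma nn_integral_abs_paths_eq_set_integral:
  assumes T: "T \<in> sets borel" "T \<subseteq> orthant"
  shows "(\<integral>\<^sup>+ \<omega>. \<integral>\<^sup>+ u. indicator T u * ennreal \<bar>F u \<omega>\<bar> \<partial>lborel \<partial>P)
     = ennreal (LINT u:T|lborel. \<integral>\<omega>. \<bar>F u \<omega>\<bar> \<partial>P)"
proof -
  let ?g = "\<lambda>(\<omega>, u). indicator T u * \<bar>F u \<omega>\<bar>"
  have "(\<lambda>(\<omega>, u). \<bar>indicator T u * F u \<omega>\<bar>) \<in> borel_measurable (P \<Otimes>\<^sub>M lborel)"
    using borel_measurable_joint_indicator[OF T] by measurable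
  then have g: "?g \<in> borel_measurable (P \<Otimes>\<^sub>M lborel)"
    by (simp add: abs_mult)
  have int: "integrable (P \<Otimes>\<^sub>M lborel) ?g"
    using T(2) by (intro Bochner_Integration.integrable_bound[OF integrable_joint g])
      (auto simp: indicator_def split: prod.splits)
  have "(\<integral>\<^sup>+ \<omega>. \<integral>\<^sup>+ u. indicator T u * ennreal \<bar>F u \<omega>\<bar> \<partial>lborel \<partial>P)
      = (\<integral>\<^sup>+ \<omega>. \<integral>\<^sup>+ u. ennreal (?g (\<omega>, u)) \<partial>lborel \<partial>P)"
    by (simp add: ennreal_mult' ennreal_indicator)
  also have "\<dots> = (\<integral>\<^sup>+ x. ennreal (?g x) \<partial>(P \<Otimes>\<^sub>M lborel))"
    by (rule lborel.nn_integral_fst[OF measurable_compose[OF g measurable_ennreal]])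
  also have "\<dots> = ennreal (integral\<^sup>L (P \<Otimes>\<^sub>M lborel) ?g)"
    using int by (rule nn_integral_eq_integral) auto
  also have "integral\<^sup>L (P \<Otimes>\<^sub>M lborel) ?g = (\<integral>u. \<integral>\<omega>. indicator T u * \<bar>F u \<omega>\<bar> \<partial>P \<partial>lborel)"
    using integral_snd[of "\<lambda>\<omega> u. indicator T u * \<bar>F u \<omega>\<bar>"] int by simp
  also have "\<dots> = (LINT u:T|lborel. \<integral>\<omega>. \<bar>F u \<omega>\<bar> \<partial>P)"
    by (simp add: set_lebesgue_integral_def)
  finally show ?thesis .
qed

lemma prob_orthant_cube_diff_gt_le:
  assumes e: "0 < e"
  shows "e * prob {\<omega> \<in> space P. e < \<bar>(LINT u:orthant|lborel. F u \<omega>) - (LINT u:cube L|lborel. F u \<omega>)\<bar>}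
     \<le> (LINT u:orthant - cube L|lborel. \<integral>\<omega>. \<bar>F u \<omega>\<bar> \<partial>P)"
proof -
  define A where "A = {\<omega> \<in> space P. e < \<bar>(LINT u:orthant|lborel. F u \<omega>) - (LINT u:cube L|lborel. F u \<omega>)\<bar>}"
  have [measurable]: "A \<in> events"
    using borel_measurable_set_integral[OF sets_orthant order_refl]
      borel_measurable_set_integral[OF sets_cube cube_subset_orthant]
    unfolding A_def by measurable
  have "ennreal (e * prob A) = (\<integral>\<^sup>+ \<omega>. ennreal e * indicator A \<omega> \<partial>P)"
    using e by (subst nn_integral_cmult_indicator) (auto simp: emeasure_eq_measure ennreal_mult)
  also have "\<dots> \<le> (\<integral>\<^sup>+ \<omega>. \<integral>\<^sup>+ u. indicator (orthant - cube L) u * ennreal \<bar>F u \<omega>\<bar> \<partial>lborel \<partial>P)"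
    using AE_set_integrable_paths
  proof (rule nn_integral_mono_AE[OF eventually_mono])
    fix \<omega> assume "set_integrable lborel orthant (\<lambda>u. F u \<omega>)"
    from set_integral_diff_le_nn_integral[OF this, of "cube L"] cube_subset_orthant
    show "ennreal e * indicator A \<omega> \<le> (\<integral>\<^sup>+ u. indicator (orthant - cube L) u * ennreal \<bar>F u \<omega>\<bar> \<partial>lborel)"
      by (auto simp: A_def indicator_def intro: order_trans[OF ennreal_leI[OF less_imp_le]])
  qed
  also have "\<dots> = ennreal (LINT u:orthant - cube L|lborel. \<integral>\<omega>. \<bar>F u \<omega>\<bar> \<partial>P)"
    by (rule nn_integral_abs_paths_eq_set_integral) auto
  finally show ?thesis
    unfolding A_def
    by (subst (asm) ennreal_le_iff) (auto simp: set_lebesgue_integral_def intro!: integral_nonneg)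
qed

lemma prob_orthant_cube_grid_diff_gt_le:
  assumes e: "0 < e"
  shows "prob {\<omega> \<in> space P.
      e < \<bar>(LINT u:orthant|lborel. F u \<omega>) - (LINT u:cube L|lborel. F (grid_floor k u) \<omega>)\<bar>}
     \<le> 2 / e * (\<Sum>j\<in>UNIV. LINT u:{u \<in> orthant. real L \<le> u $ j}|lborel. \<integral>\<omega>. \<bar>F u \<omega>\<bar> \<partial>P)
       + prob {\<omega> \<in> space P.
           e / 2 < \<bar>(LINT u:cube L|lborel. F (grid_floor k u) \<omega>) - (LINT u:cube L|lborel. F u \<omega>)\<bar>}"
proof -
  have "e / 2 * prob {\<omega> \<in> space P. e / 2 < \<bar>(LINT u:orthant|lborel. F u \<omega>) - (LINT u:cube L|lborel. F u \<omega>)\<bar>}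
      \<le> (LINT u:orthant - cube L|lborel. \<integral>\<omega>. \<bar>F u \<omega>\<bar> \<partial>P)"
    using e by (intro prob_orthant_cube_diff_gt_le) simp
  also have "\<dots> \<le> (\<Sum>j\<in>UNIV. LINT u:{u \<in> orthant. real L \<le> u $ j}|lborel. \<integral>\<omega>. \<bar>F u \<omega>\<bar> \<partial>P)"
    by (intro set_integral_orthant_diff_cube_le set_integrable_mean_abs) simp
  finally have tail: "prob {\<omega> \<in> space P.
        e / 2 < \<bar>(LINT u:orthant|lborel. F u \<omega>) - (LINT u:cube L|lborel. F u \<omega>)\<bar>}
      \<le> 2 / e * (\<Sum>j\<in>UNIV. LINT u:{u \<in> orthant. real L \<le> u $ j}|lborel. \<integral>\<omega>. \<bar>F u \<omega>\<bar> \<partial>P)"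
    using e by (simp add: field_simps)
  have "prob {\<omega> \<in> space P. e / 2 + e / 2
        < \<bar>(LINT u:orthant|lborel. F u \<omega>) - (LINT u:cube L|lborel. F (grid_floor k u) \<omega>)\<bar>}
      \<le> prob {\<omega> \<in> space P. e / 2 < \<bar>(LINT u:orthant|lborel. F u \<omega>) - (LINT u:cube L|lborel. F u \<omega>)\<bar>}
        + prob {\<omega> \<in> space P.
            e / 2 < \<bar>(LINT u:cube L|lborel. F u \<omega>) - (LINT u:cube L|lborel. F (grid_floor k u) \<omega>)\<bar>}"
    by (intro prob_abs_diff_gt_le borel_measurable_cube_grid_integral borel_measurable_set_integral
        sets_orthant sets_cube cube_subset_orthant order_refl)
  with tail show ?thesis
    by (simp add: abs_minus_commute)
qed

end

lemma fdd_conv_tendsto_integral_cube_grid_integral: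
  fixes Y :: "nat \<Rightarrow> real ^ 'm::finite \<Rightarrow> 'a \<Rightarrow> real" and Z :: "real ^ 'm \<Rightarrow> 'b \<Rightarrow> real"
    and f :: "real \<Rightarrow> real"
  assumes fdd: "fdd_conv M Y N Z orthant" and f: "continuous_on UNIV f" "bounded (range f)"
  shows "(\<lambda>n. \<integral>\<omega>. f (LINT u:cube L|lborel. Y n (grid_floor k u) \<omega>) \<partial>M n)
     \<longlonglongrightarrow> (\<integral>\<omega>. f (LINT u:cube L|lborel. Z (grid_floor k u) \<omega>) \<partial>N)"
proof -
  have "finite (grid_floor k ` cube L)" "grid_floor k ` cube L \<subseteq> orthant"
    using finite_grid_floor_cube grid_floor_in_cube cube_subset_orthant by blast+
  from fdd_conv_tendsto_integral_linear_combination[OF fdd this f,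
      where w="\<lambda>v. measure lborel (cube L \<inter> grid_floor k -` {v})"]
  show ?thesis
    using set_integral_cube_grid_floor_eq_sum[where g="\<lambda>v. Y _ v _"]
      set_integral_cube_grid_floor_eq_sum[where g="\<lambda>v. Z v _"]
    by simp
qed

lemma eventually_prob_orthant_cube_grid_diff_lt:
  fixes Y :: "nat \<Rightarrow> real ^ 'm::finite \<Rightarrow> 'a \<Rightarrow> real"
  assumes Y: "\<And>n. integrable_orthant_field (M n) (Y n)" and e: "0 < e"
    and tail: "\<And>j. limsup (\<lambda>n. ereal (LINT u:{u \<in> orthant. real L \<le> u $ j}|lborel. \<integral>\<omega>. \<bar>Y n u \<omega>\<bar> \<partial>M n))
      < ereal (e * r / (4 * real CARD('m)))"
    and discr: "limsup (\<lambda>n. ereal (measure (M n) {\<omega> \<in> space (M n).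
      e / 2 < \<bar>(LINT u:cube L|lborel. Y n (grid_floor k u) \<omega>) - (LINT u:cube L|lborel. Y n u \<omega>)\<bar>}))
      < ereal (r / 2)"
  shows "\<forall>\<^sub>F n in sequentially. measure (M n) {\<omega> \<in> space (M n).
    e < \<bar>(LINT u:orthant|lborel. Y n u \<omega>) - (LINT u:cube L|lborel. Y n (grid_floor k u) \<omega>)\<bar>} < r"
proof -
  have "\<forall>\<^sub>F n in sequentially. \<forall>j. ereal (LINT u:{u \<in> orthant. real L \<le> u $ j}|lborel. \<integral>\<omega>. \<bar>Y n u \<omega>\<bar> \<partial>M n)
      < ereal (e * r / (4 * real CARD('m)))"
    by (intro eventually_all_finite allI Limsup_lessD tail)
  with Limsup_lessD[OF discr] show ?thesis
  proof eventually_elim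
    case (elim n)
    have "2 / e * (\<Sum>j\<in>UNIV. LINT u:{u \<in> orthant. real L \<le> u $ j}|lborel. \<integral>\<omega>. \<bar>Y n u \<omega>\<bar> \<partial>M n)
        \<le> 2 / e * (\<Sum>j\<in>(UNIV :: 'm set). e * r / (4 * real CARD('m)))"
      using elim(2) e by (intro mult_left_mono sum_mono) (auto simp: less_imp_le)
    also have "\<dots> = r / 2"
      using e by simp
    finally show ?case
      using integrable_orthant_field.prob_orthant_cube_grid_diff_gt_le[OF Y e, of n L k] elim(1)
      by simp
  qed
qed

lemma eventually_cube_approximation:
  fixes Y :: "nat \<Rightarrow> real ^ 'm::finite \<Rightarrow> 'a \<Rightarrow> real" and f :: "real \<Rightarrow> real"
  assumes Z: "integrable_orthant_field N Z"
    and tails: "\<And>j. (\<lambda>L::nat. limsup (\<lambda>n. ereal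
      (LINT u:{u \<in> orthant. real L \<le> u $ j}|lborel. \<integral>\<omega>. \<bar>Y n u \<omega>\<bar> \<partial>M n))) \<longlonglongrightarrow> 0"
    and f: "continuous_on UNIV f" "\<And>x. \<bar>f x\<bar> \<le> B" and "0 < \<delta>" "0 < r"
  shows "\<forall>\<^sub>F L in sequentially. 0 < L
    \<and> (\<forall>j. limsup (\<lambda>n. ereal (LINT u:{u \<in> orthant. real L \<le> u $ j}|lborel. \<integral>\<omega>. \<bar>Y n u \<omega>\<bar> \<partial>M n)) < ereal \<delta>)
    \<and> \<bar>(\<integral>\<omega>. f (LINT u:cube L|lborel. Z u \<omega>) \<partial>N) - (\<integral>\<omega>. f (LINT u:orthant|lborel. Z u \<omega>) \<partial>N)\<bar> < r"
proof -
  have "\<forall>\<^sub>F L in sequentially. \<forall>j. limsup (\<lambda>n. ereal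
      (LINT u:{u \<in> orthant. real L \<le> u $ j}|lborel. \<integral>\<omega>. \<bar>Y n u \<omega>\<bar> \<partial>M n)) < ereal \<delta>"
    using \<open>0 < \<delta>\<close> by (intro eventually_all_finite allI order_tendstoD(2)[OF tails]) simp
  moreover have "\<forall>\<^sub>F L in sequentially.
      \<bar>(\<integral>\<omega>. f (LINT u:cube L|lborel. Z u \<omega>) \<partial>N) - (\<integral>\<omega>. f (LINT u:orthant|lborel. Z u \<omega>) \<partial>N)\<bar> < r"
    using tendstoD[OF integrable_orthant_field.tendsto_integral_cube_integral[OF Z f], of r] \<open>0 < r\<close>
    by (simp add: dist_real_def)
  ultimately show ?thesis
    using eventually_gt_at_top[of 0] by eventually_elim auto
qed

lemma eventually_grid_approximation:
  fixes Y :: "nat \<Rightarrow> real ^ 'm::finite \<Rightarrow> 'a \<Rightarrow> real" and f :: "real \<Rightarrow> real"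
  assumes Z: "integrable_orthant_field N Z"
    and discr: "\<And>e L. 0 < e \<Longrightarrow> 0 < L \<Longrightarrow> (\<lambda>k. limsup (\<lambda>n. ereal (measure (M n)
      {\<omega> \<in> space (M n). e < \<bar>(LINT u:cube L|lborel. Y n (grid_floor k u) \<omega>)
        - (LINT u:cube L|lborel. Y n u \<omega>)\<bar>}))) \<longlonglongrightarrow> 0"
    and f: "continuous_on UNIV f" "\<And>x. \<bar>f x\<bar> \<le> B" and "0 < e" "0 < r" "0 < L"
  shows "\<forall>\<^sub>F k in sequentially. limsup (\<lambda>n. ereal (measure (M n)
      {\<omega> \<in> space (M n). e < \<bar>(LINT u:cube L|lborel. Y n (grid_floor k u) \<omega>)
        - (LINT u:cube L|lborel. Y n u \<omega>)\<bar>})) < ereal r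
    \<and> \<bar>(\<integral>\<omega>. f (LINT u:cube L|lborel. Z (grid_floor k u) \<omega>) \<partial>N)
      - (\<integral>\<omega>. f (LINT u:cube L|lborel. Z u \<omega>) \<partial>N)\<bar> < r"
proof (rule eventually_conj)
  show "\<forall>\<^sub>F k in sequentially. limsup (\<lambda>n. ereal (measure (M n)
      {\<omega> \<in> space (M n). e < \<bar>(LINT u:cube L|lborel. Y n (grid_floor k u) \<omega>)
        - (LINT u:cube L|lborel. Y n u \<omega>)\<bar>})) < ereal r"
    using assms(4-) by (intro order_tendstoD(2)[OF discr]) auto
  show "\<forall>\<^sub>F k in sequentially. \<bar>(\<integral>\<omega>. f (LINT u:cube L|lborel. Z (grid_floor k u) \<omega>) \<partial>N)
      - (\<integral>\<omega>. f (LINT u:cube L|lborel. Z u \<omega>) \<partial>N)\<bar> < r"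
    using tendstoD[OF orthant_field.tendsto_integral_cube_grid_integral[OF
        integrable_orthant_field.axioms(1)[OF Z] f], of r] \<open>0 < r\<close>
    by (simp add: dist_real_def)
qed

theorem tendsto_integral_lipschitz_orthant_integral:
  fixes M :: "nat \<Rightarrow> 'a measure" and N :: "'b measure"
    and Y :: "nat \<Rightarrow> real ^ 'm::finite \<Rightarrow> 'a \<Rightarrow> real" and Z :: "real ^ 'm \<Rightarrow> 'b \<Rightarrow> real"
    and f :: "real \<Rightarrow> real"
  assumes Y: "\<And>n. integrable_orthant_field (M n) (Y n)" and Z: "integrable_orthant_field N Z"
    and fdd: "fdd_conv M Y N Z orthant"
    and tails: "\<And>j. (\<lambda>L::nat. limsup (\<lambda>n. ereal
      (LINT u:{u \<in> orthant. real L \<le> u $ j}|lborel. \<integral>\<omega>. \<bar>Y n u \<omega>\<bar> \<partial>M n))) \<longlonglongrightarrow> 0"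
    and discr: "\<And>e L. 0 < e \<Longrightarrow> 0 < L \<Longrightarrow> (\<lambda>k. limsup (\<lambda>n. ereal (measure (M n)
      {\<omega> \<in> space (M n). e < \<bar>(LINT u:cube L|lborel. Y n (grid_floor k u) \<omega>)
        - (LINT u:cube L|lborel. Y n u \<omega>)\<bar>}))) \<longlonglongrightarrow> 0"
    and f: "C-lipschitz_on UNIV f" "\<And>x. \<bar>f x\<bar> \<le> B"
  shows "(\<lambda>n. \<integral>\<omega>. f (LINT u:orthant|lborel. Y n u \<omega>) \<partial>M n) \<longlonglongrightarrow> (\<integral>\<omega>. f (LINT u:orthant|lborel. Z u \<omega>) \<partial>N)"
proof (rule tendsto_integral_lipschitz_of_approximations[OF _ _ f])
  have Yf: "orthant_field (M n) (Y n)" for n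
    using Y by (rule integrable_orthant_field.axioms(1))
  show "prob_space (M n)" for n
    using Yf by (rule orthant_field.axioms(1))
  show "(\<lambda>\<omega>. LINT u:orthant|lborel. Y n u \<omega>) \<in> borel_measurable (M n)" for n
    using orthant_field.borel_measurable_set_integral[OF Yf sets_orthant order_refl] .
  fix e r :: real assume e: "0 < e" and r: "0 < r"
  have fc: "continuous_on UNIV f"
    using f(1) by (rule lipschitz_on_continuous_on)
  have "0 < e * r / (4 * real CARD('m))"
    using e r by simp
  from eventually_cube_approximation[OF Z tails fc f(2) this, of "r / 2"] r
  obtain L where "0 < L" and tail_L: "\<And>j. limsup (\<lambda>n. ereal
      (LINT u:{u \<in> orthant. real L \<le> u $ j}|lborel. \<integral>\<omega>. \<bar>Y n u \<omega>\<bar> \<partial>M n))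
      < ereal (e * r / (4 * real CARD('m)))"
    and Z_L: "\<bar>(\<integral>\<omega>. f (LINT u:cube L|lborel. Z u \<omega>) \<partial>N) - (\<integral>\<omega>. f (LINT u:orthant|lborel. Z u \<omega>) \<partial>N)\<bar> < r / 2"
    unfolding eventually_sequentially by auto
  from eventually_grid_approximation[OF Z discr fc f(2), of "e / 2" "r / 2" L] e r \<open>0 < L\<close>
  obtain k where discr_k: "limsup (\<lambda>n. ereal (measure (M n)
      {\<omega> \<in> space (M n). e / 2 < \<bar>(LINT u:cube L|lborel. Y n (grid_floor k u) \<omega>)
        - (LINT u:cube L|lborel. Y n u \<omega>)\<bar>})) < ereal (r / 2)"
    and Z_k: "\<bar>(\<integral>\<omega>. f (LINT u:cube L|lborel. Z (grid_floor k u) \<omega>) \<partial>N)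
      - (\<integral>\<omega>. f (LINT u:cube L|lborel. Z u \<omega>) \<partial>N)\<bar> < r / 2"
    unfolding eventually_sequentially by auto
  have "bounded (range f)"
    using f(2) by (auto simp: bounded_iff)
  show "\<exists>A U. (\<forall>n. A n \<in> borel_measurable (M n))
      \<and> (\<lambda>n. \<integral>\<omega>. f (A n \<omega>) \<partial>M n) \<longlonglongrightarrow> (\<integral>\<omega>. f (U \<omega>) \<partial>N)
      \<and> \<bar>(\<integral>\<omega>. f (U \<omega>) \<partial>N) - (\<integral>\<omega>. f (LINT u:orthant|lborel. Z u \<omega>) \<partial>N)\<bar> < r
      \<and> (\<forall>\<^sub>F n in sequentially. measure (M n) {\<omega> \<in> space (M n).
            e < \<bar>(LINT u:orthant|lborel. Y n u \<omega>) - A n \<omega>\<bar>} < r)"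
  proof (intro exI conjI allI)
    show "(\<lambda>\<omega>. LINT u:cube L|lborel. Y n (grid_floor k u) \<omega>) \<in> borel_measurable (M n)" for n
      using orthant_field.borel_measurable_cube_grid_integral[OF Yf] .
    show "(\<lambda>n. \<integral>\<omega>. f (LINT u:cube L|lborel. Y n (grid_floor k u) \<omega>) \<partial>M n)
        \<longlonglongrightarrow> (\<integral>\<omega>. f (LINT u:cube L|lborel. Z (grid_floor k u) \<omega>) \<partial>N)"
      by (rule fdd_conv_tendsto_integral_cube_grid_integral[OF fdd fc \<open>bounded (range f)\<close>])
    show "\<bar>(\<integral>\<omega>. f (LINT u:cube L|lborel. Z (grid_floor k u) \<omega>) \<partial>N)
        - (\<integral>\<omega>. f (LINT u:orthant|lborel. Z u \<omega>) \<partial>N)\<bar> < r"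
      using Z_k Z_L by linarith
    show "\<forall>\<^sub>F n in sequentially. measure (M n) {\<omega> \<in> space (M n). e < \<bar>(LINT u:orthant|lborel. Y n u \<omega>)
        - (LINT u:cube L|lborel. Y n (grid_floor k u) \<omega>)\<bar>} < r"
      using eventually_prob_orthant_cube_grid_diff_lt[OF Y e tail_L discr_k] .
  qed
qed

theorem weak_conv_orthant_integral:
  fixes M :: "nat \<Rightarrow> 'a measure" and N :: "'b measure"
    and Y :: "nat \<Rightarrow> real ^ 'm::finite \<Rightarrow> 'a \<Rightarrow> real" and Z :: "real ^ 'm \<Rightarrow> 'b \<Rightarrow> real"
  assumes Y: "\<And>n. integrable_orthant_field (M n) (Y n)" and Z: "integrable_orthant_field N Z"
    and fdd: "fdd_conv M Y N Z orthant"
    and tails: "\<And>j. (\<lambda>L::nat. limsup (\<lambda>n. ereal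
      (LINT u:{u \<in> orthant. real L \<le> u $ j}|lborel. \<integral>\<omega>. \<bar>Y n u \<omega>\<bar> \<partial>M n))) \<longlonglongrightarrow> 0"
    and discr: "\<And>e L. 0 < e \<Longrightarrow> 0 < L \<Longrightarrow> (\<lambda>k. limsup (\<lambda>n. ereal (measure (M n)
      {\<omega> \<in> space (M n). e < \<bar>(LINT u:cube L|lborel. Y n (grid_floor k u) \<omega>)
        - (LINT u:cube L|lborel. Y n u \<omega>)\<bar>}))) \<longlonglongrightarrow> 0"
  shows "weak_conv_m (\<lambda>n. distr (M n) borel (\<lambda>\<omega>. LINT u:orthant|lborel. Y n u \<omega>))
                     (distr N borel (\<lambda>\<omega>. LINT u:orthant|lborel. Z u \<omega>))"
proof (rule integral_cts_step_conv_imp_weak_conv)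
  have Yf: "orthant_field (M n) (Y n)" for n
    using Y by (rule integrable_orthant_field.axioms(1))
  have Zf: "orthant_field N Z"
    using Z by (rule integrable_orthant_field.axioms(1))
  have S: "(\<lambda>\<omega>. LINT u:orthant|lborel. Y n u \<omega>) \<in> borel_measurable (M n)" for n
    using orthant_field.borel_measurable_set_integral[OF Yf sets_orthant order_refl] .
  have T: "(\<lambda>\<omega>. LINT u:orthant|lborel. Z u \<omega>) \<in> borel_measurable N"
    using orthant_field.borel_measurable_set_integral[OF Zf sets_orthant order_refl] .
  show "real_distribution (distr (M n) borel (\<lambda>\<omega>. LINT u:orthant|lborel. Y n u \<omega>))" for n
    using prob_space.real_distribution_distr[OF orthant_field.axioms(1)[OF Yf] S] by simp
  show "real_distribution (distr N borel (\<lambda>\<omega>. LINT u:orthant|lborel. Z u \<omega>))"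
    using prob_space.real_distribution_distr[OF orthant_field.axioms(1)[OF Zf] T] by simp
  fix x y :: real assume "x < y"
  have "cts_step x y \<in> borel_measurable borel"
    using lipschitz_on_continuous_on[OF lipschitz_cts_step[OF \<open>x < y\<close>]]
    by (rule borel_measurable_continuous_onI)
  with tendsto_integral_lipschitz_orthant_integral[OF Y Z fdd tails discr
      lipschitz_cts_step[OF \<open>x < y\<close>] abs_cts_step_le]
  show "(\<lambda>n. integral\<^sup>L (distr (M n) borel (\<lambda>\<omega>. LINT u:orthant|lborel. Y n u \<omega>)) (cts_step x y))
      \<longlonglongrightarrow> integral\<^sup>L (distr N borel (\<lambda>\<omega>. LINT u:orthant|lborel. Z u \<omega>)) (cts_step x y)"
    by (simp add: integral_distr S T)
qed

theorem lemmaA2: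
  fixes M :: "nat \<Rightarrow> 'a measure" and N :: "'b measure"
    and Y :: "nat \<Rightarrow> real ^ 'm \<Rightarrow> 'a \<Rightarrow> real"
    and Z :: "real ^ 'm \<Rightarrow> 'b \<Rightarrow> real"
  assumes probM: "\<And>n. prob_space (M n)"
    and probN: "prob_space N"
    and measY: "\<And>n u. u \<in> orthant \<Longrightarrow> Y n u \<in> borel_measurable (M n)"
    and measZ: "\<And>u. u \<in> orthant \<Longrightarrow> Z u \<in> borel_measurable N"
    and contY: "\<And>n \<omega>. \<omega> \<in> space (M n) \<Longrightarrow> continuous_on orthant (\<lambda>u. Y n u \<omega>)"
    and contZ: "\<And>\<omega>. \<omega> \<in> space N \<Longrightarrow> continuous_on orthant (\<lambda>u. Z u \<omega>)"
    and fdd: "fdd_conv M Y N Z orthant"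
    and intY: "\<And>n. (\<integral>\<^sup>+ u. indicator orthant u * (\<integral>\<^sup>+ \<omega>. ennreal \<bar>Y n u \<omega>\<bar> \<partial>M n) \<partial>lborel) < \<infinity>"
    and intZ: "(\<integral>\<^sup>+ u. indicator orthant u * (\<integral>\<^sup>+ \<omega>. ennreal \<bar>Z u \<omega>\<bar> \<partial>N) \<partial>lborel) < \<infinity>"
    and tails: "\<And>j. (\<lambda>L::nat. limsup (\<lambda>n. ereal
                   (LINT u:{u \<in> orthant. real L \<le> u $ j}|lborel. (\<integral>\<omega>. \<bar>Y n u \<omega>\<bar> \<partial>M n))))
                 \<longlonglongrightarrow> 0"
    and discr: "\<And>(eps::real) (L::nat). eps > 0 \<Longrightarrow> L > 0 \<Longrightarrow>
        (\<lambda>k::nat. limsup (\<lambda>n. ereal (measure (M n)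
           {\<omega> \<in> space (M n).
              \<bar>(LINT u:{u. \<forall>j. 0 \<le> u $ j \<and> u $ j \<le> real L}|lborel.
                   Y n (\<chi> j. real_of_int \<lfloor>u $ j * real k\<rfloor> / real k) \<omega>)
               - (LINT u:{u. \<forall>j. 0 \<le> u $ j \<and> u $ j \<le> real L}|lborel. Y n u \<omega>)\<bar> > eps})))
        \<longlonglongrightarrow> 0"
  shows "weak_conv_m (\<lambda>n. distr (M n) borel (\<lambda>\<omega>. LINT u:orthant|lborel. Y n u \<omega>))
                     (distr N borel (\<lambda>\<omega>. LINT u:orthant|lborel. Z u \<omega>))"
proof (rule weak_conv_orthant_integral[OF _ _ fdd tails])
  show "integrable_orthant_field (M n) (Y n)" for n
    by (intro integrable_orthant_field.intro orthant_field.intro orthant_field_axioms.intro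
        integrable_orthant_field_axioms.intro probM measY contY intY)
  show "integrable_orthant_field N Z"
    by (intro integrable_orthant_field.intro orthant_field.intro orthant_field_axioms.intro
        integrable_orthant_field_axioms.intro probN measZ contZ intZ)
  show "(\<lambda>k. limsup (\<lambda>n. ereal (measure (M n)
      {\<omega> \<in> space (M n). e < \<bar>(LINT u:cube L|lborel. Y n (grid_floor k u) \<omega>)
        - (LINT u:cube L|lborel. Y n u \<omega>)\<bar>}))) \<longlonglongrightarrow> 0" if "0 < e" "0 < L" for e L
    using discr[OF that] by (simp add: cube_def grid_floor_def)
qed

end
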